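(* Let $c_1,c_2>0$, $x_T>0$, $\tau>0$, $\theta,\eta_1,\eta_2\in\mathbb{R}$, and set $\lambda=c_1+c_2$ and $f(y)=c_2(x_T-y)-c_1y$. Assume $1+\eta_1\lambda(1-\theta)\tau\neq0$ and $1+\eta_2\lambda\theta\tau\neq0$, and define $$Q_1=\frac{1-(1-\eta_1)\lambda(1-\theta)\tau}{1+\eta_1\lambda(1-\theta)\tau},\qquad Q_2=\frac{1-(1-\eta_2)\lambda\theta\tau}{1+\eta_2\lambda\theta\tau},$$ with $Q_2\neq 0$. Consider the split-step tau-leaping iteration $$\hat Y_n=Y_n+(1-\theta)\tau\big((1-\eta_1)f(Y_n)+\eta_1 f(\hat Y_n)\big),$$ $$\tilde Y_n=\hat Y_n+P^{(2)}_n-P^{(1)}_n-\tau f(\hat Y_n),$$ $$Y_{n+1}=\tilde Y_n+\theta\tau\big((1-\eta_2)f(\tilde Y_n)+\eta_2 f(Y_{n+1})\big),$$ where, conditionally on $Y_0,\dots,Y_n$, $P^{(1)}_n$ and $P^{(2)}_n$ are independent Poisson random variables with means $c_1\hat Y_n\tau$ and $c_2(x_T-\hat Y_n)\tau$ respectively. Assume $Y_0$ has finite second moment and the iteration is well defined (the Poisson means are almost surely nonnegative). If $|Q_1Q_2|<1$, then $$\lim_{n\to\infty}\mathbb{E}[Y_n]=\frac{c_2}{\lambda}x_T,\qquad \lim_{n\to\infty}\mathrm{Var}[Y_n]=\frac{2\lambda\tau}{Q_2^{-2}-Q_1^{2}}\cdot\frac{c_1c_2}{\lambda^2}x_T .$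$
   Context: This models the reversible isomerization $S_1\rightleftharpoons S_2$ with forward rate $c_1$ (propensity $c_1X_1$) and backward rate $c_2$ (propensity $c_2X_2$), total molecule number $X_1+X_2=x_T$ conserved; $Y_n$ approximates $X_1(t_n)$ with $t_{n+1}-t_n=\tau$. The quantities $\frac{c_2}{\lambda}x_T$ and $\frac{c_1c_2}{\lambda^2}x_T$ are the mean and variance of the exact stationary (binomial) distribution of $X_1$. The product $Q_1Q_2$ is called the propagation coefficient of the scheme. *)

theory Defs
  imports "HOL-Probability.Probability"
begin

text \<open>Poisson point probabilities with mean mu (mu >= 0); same formula as the
library's poisson_pmf, which however requires a strictly positive rate.
For mu = 0 this is the point mass at 0.\<close>
definition poisson_prob :: "real \<Rightarrow> nat \<Rightarrow> real" where
  "poisson_prob mu k = mu ^ k / fact k * exp (- mu)"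

end

theory Submission
  imports Defs
begin

text \<open>Both implicit half-steps are affine maps fixing the equilibrium
  \<open>m = c2 / lam * xT\<close>: \<open>Yhat = m + Q1 (Y - m)\<close> and \<open>Y' = m + Q2 (Ytil - m)\<close>.
  Given the past, the Poisson increment minus its conditional mean is a noise term that has
  mean zero, is uncorrelated with every function of \<open>Yhat\<close>, and has conditional variance equal
  to the total propensity \<open>\<tau> (c1 Yhat + c2 (xT - Yhat))\<close>. Hence the mean of \<open>Yhat\<close> minus \<open>m\<close>
  is multiplied by \<open>Q1 Q2\<close> in each step, and its variance obeys
  \<open>V' = (Q1 Q2)\<^sup>2 (V + propensity)\<close>; for \<open>|Q1 Q2| < 1\<close> both recursions converge.\<close>

lemma exp_series_sums: "(\<lambda>k. x ^ k / fact k) sums exp (x::real)"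
  using exp_converges[of x] by (simp add: divide_inverse mult.commute scaleR_conv_of_real)

lemma exp_series_first_moment_sums: "(\<lambda>k. real k * (x ^ k / fact k)) sums (x * exp (x::real))"
proof -
  have "(\<lambda>k. real (Suc k) * (x ^ Suc k / fact (Suc k))) = (\<lambda>k. x * (x ^ k / fact k))"
    by (rule ext) (simp add: field_simps del: of_nat_Suc)
  then show ?thesis
    using sums_mult[OF exp_series_sums, of x x] sums_Suc_iff[of "\<lambda>k. real k * (x ^ k / fact k)"]
    by simp
qed

lemma exp_series_second_moment_sums:
  "(\<lambda>k. (real k)\<^sup>2 * (x ^ k / fact k)) sums (x * (x * exp x + exp (x::real)))"
proof -
  have shift: "real (Suc k) * (x ^ Suc k / fact (Suc k)) = x * (x ^ k / fact k)" for k
    by (simp add: field_simps del: of_nat_Suc)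
  have "(\<lambda>k. (real (Suc k))\<^sup>2 * (x ^ Suc k / fact (Suc k)))
      = (\<lambda>k. x * (real k * (x ^ k / fact k) + x ^ k / fact k))"
    unfolding power2_eq_square mult.assoc shift by (simp add: algebra_simps add_divide_distrib)
  then show ?thesis
    using sums_mult[OF sums_add[OF exp_series_first_moment_sums[of x] exp_series_sums[of x]], of x]
      sums_Suc_iff[of "\<lambda>k. (real k)\<^sup>2 * (x ^ k / fact k)"]
    by simp
qed

lemma poisson_prob_sums: "(\<lambda>k. poisson_prob mu k) sums 1"
  using sums_mult2[OF exp_series_sums[of mu], of "exp (-mu)"]
  by (simp add: poisson_prob_def exp_minus field_simps)

lemma poisson_prob_mean_sums: "(\<lambda>k. real k * poisson_prob mu k) sums mu"
  using sums_mult2[OF exp_series_first_moment_sums[of mu], of "exp (-mu)"]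
  by (simp add: poisson_prob_def exp_minus field_simps)

lemma poisson_prob_second_moment_sums: "(\<lambda>k. (real k)\<^sup>2 * poisson_prob mu k) sums (mu + mu\<^sup>2)"
proof -
  have "mu * (mu * exp mu + exp mu) * exp (-mu) = mu + mu\<^sup>2"
    by (simp add: exp_minus field_simps power2_eq_square)
  then show ?thesis
    using sums_mult2[OF exp_series_second_moment_sums[of mu], of "exp (-mu)"]
    by (simp add: poisson_prob_def mult.assoc)
qed

lemma poisson_prob_nonneg: "0 \<le> mu \<Longrightarrow> 0 \<le> poisson_prob mu k"
  by (simp add: poisson_prob_def)

lemma poisson_prob_le_1:
  assumes "0 \<le> mu"
  shows "poisson_prob mu k \<le> 1"
proof -
  have "(\<Sum>i\<in>{k}. poisson_prob mu i) \<le> (\<Sum>i. poisson_prob mu i)"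
    using sums_summable[OF poisson_prob_sums] assms
    by (intro sum_le_suminf) (auto simp: poisson_prob_nonneg)
  then show ?thesis
    using sums_unique[OF poisson_prob_sums[of mu]] by simp
qed

lemma poisson_weighted_sum_ennreal:
  assumes a: "\<And>k. 0 \<le> a k" and mu: "0 \<le> mu" and s: "(\<lambda>k. a k * poisson_prob mu k) sums s"
  shows "(\<Sum>k. ennreal (a k * poisson_prob mu k)) = ennreal s" and "0 \<le> s"
proof -
  have nonneg: "0 \<le> a k * poisson_prob mu k" for k
    using a poisson_prob_nonneg[OF mu] by simp
  show "(\<Sum>k. ennreal (a k * poisson_prob mu k)) = ennreal s"
    by (rule suminf_ennreal_eq[OF nonneg s])
  show "0 \<le> s"
    by (rule sums_le[OF nonneg sums_zero s])
qed

lemma suminf_indicator_singleton: "(\<Sum>n. f n * indicator {n} (i::nat)) = (f i :: ennreal)"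
  by (rule suminf_cmult_indicator) (auto simp: disjoint_family_on_def)

lemma suminf_suminf_indicator_pair:
  fixes F :: "nat \<Rightarrow> nat \<Rightarrow> ennreal"
  shows "(\<Sum>k1. \<Sum>k2. F k1 k2 * indicator {k1} i * indicator {k2} j) = F i j"
proof -
  have "(\<Sum>k2. F k1 k2 * indicator {k1} i * indicator {k2} j) = F k1 j * indicator {k1} i" for k1
    using suminf_indicator_singleton[of "\<lambda>k2. F k1 k2 * indicator {k1} i" j] by (simp add: mult_ac)
  then show ?thesis
    using suminf_indicator_singleton[of "\<lambda>k1. F k1 j" i] by simp
qed

text \<open>\<open>joint_law\<close> says that, conditionally on \<open>X\<close>, the counts \<open>N1\<close> and \<open>N2\<close> are independent
  Poisson variables with means \<open>\<mu>1 X\<close> and \<open>\<mu>2 X\<close>. The a.s. bound on \<open>X\<close> makes every moment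
  used below finite.\<close>

locale poisson_pair_given = prob_space M for M :: "'a measure" +
  fixes X :: "'a \<Rightarrow> real" and N1 N2 :: "'a \<Rightarrow> nat" and \<mu>1 \<mu>2 :: "real \<Rightarrow> real"
    and lo hi :: real
  assumes X_measurable[measurable]: "X \<in> borel_measurable M"
    and N1_measurable[measurable]: "N1 \<in> measurable M (count_space UNIV)"
    and N2_measurable[measurable]: "N2 \<in> measurable M (count_space UNIV)"
    and continuous_\<mu>1: "continuous_on UNIV \<mu>1" and continuous_\<mu>2: "continuous_on UNIV \<mu>2"
    and X_bounded: "AE \<omega> in M. lo \<le> X \<omega> \<and> X \<omega> \<le> hi"
    and means_nonneg: "AE \<omega> in M. 0 \<le> \<mu>1 (X \<omega>) \<and> 0 \<le> \<mu>2 (X \<omega>)"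
    and joint_law: "\<And>B k1 k2. B \<in> sets borel \<Longrightarrow>
      measure M {\<omega> \<in> space M. X \<omega> \<in> B \<and> N1 \<omega> = k1 \<and> N2 \<omega> = k2}
      = (\<integral>\<omega>. indicator {\<omega> \<in> space M. X \<omega> \<in> B} \<omega>
            * poisson_prob (\<mu>1 (X \<omega>)) k1 * poisson_prob (\<mu>2 (X \<omega>)) k2 \<partial>M)"
begin

lemma integrable_continuous_fun:
  fixes h :: "real \<Rightarrow> real"
  assumes h: "continuous_on UNIV h"
  shows "integrable M (\<lambda>\<omega>. h (X \<omega>))"
proof -
  have [measurable]: "h \<in> borel_measurable borel"
    by (rule borel_measurable_continuous_onI[OF h])
  obtain K where K: "\<And>z. z \<in> {lo..hi} \<Longrightarrow> norm (h z) \<le> K"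
    using compact_imp_bounded[OF compact_continuous_image[OF continuous_on_subset[OF h]]]
    by (metis bounded_iff compact_Icc image_eqI subset_UNIV)
  show ?thesis
  proof (rule integrable_const_bound[where B=K])
    show "AE \<omega> in M. norm (h (X \<omega>)) \<le> K"
      using X_bounded by eventually_elim (use K in auto)
  qed measurable
qed

lemma measurable_poisson_prob_\<mu>[measurable]:
  "(\<lambda>\<omega>. poisson_prob (\<mu>1 (X \<omega>)) k) \<in> borel_measurable M"
  "(\<lambda>\<omega>. poisson_prob (\<mu>2 (X \<omega>)) k) \<in> borel_measurable M"
  using borel_measurable_continuous_onI[OF continuous_\<mu>1]
    borel_measurable_continuous_onI[OF continuous_\<mu>2]
  unfolding poisson_prob_def by measurable

abbreviation joint_weight :: "nat \<Rightarrow> nat \<Rightarrow> 'a \<Rightarrow> real" where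
  "joint_weight k1 k2 \<omega> \<equiv> poisson_prob (\<mu>1 (X \<omega>)) k1 * poisson_prob (\<mu>2 (X \<omega>)) k2"

lemma joint_weight_bounds: "AE \<omega> in M. 0 \<le> joint_weight k1 k2 \<omega> \<and> joint_weight k1 k2 \<omega> \<le> 1"
  using means_nonneg
  by eventually_elim (auto simp: poisson_prob_nonneg poisson_prob_le_1 intro: mult_le_one)

lemma emeasure_joint_event:
  assumes [measurable]: "B \<in> sets borel"
  shows "emeasure M {\<omega> \<in> space M. X \<omega> \<in> B \<and> N1 \<omega> = k1 \<and> N2 \<omega> = k2}
    = (\<integral>\<^sup>+\<omega>. indicator (X -` B \<inter> space M) \<omega> * ennreal (joint_weight k1 k2 \<omega>) \<partial>M)"
proof -
  let ?f = "\<lambda>\<omega>. indicator {\<omega> \<in> space M. X \<omega> \<in> B} \<omega> * joint_weight k1 k2 \<omega>"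
  have nonneg: "AE \<omega> in M. 0 \<le> ?f \<omega>"
    using joint_weight_bounds[of k1 k2] by eventually_elim auto
  have "integrable M ?f"
  proof (rule integrable_const_bound[where B=1])
    show "AE \<omega> in M. norm (?f \<omega>) \<le> 1"
      using joint_weight_bounds[of k1 k2] by eventually_elim (auto simp: indicator_def)
  qed measurable
  then have "ennreal (integral\<^sup>L M ?f) = (\<integral>\<^sup>+\<omega>. ennreal (?f \<omega>) \<partial>M)"
    using nonneg by (rule nn_integral_eq_integral[symmetric])
  also have "\<dots> = (\<integral>\<^sup>+\<omega>. indicator (X -` B \<inter> space M) \<omega> * ennreal (joint_weight k1 k2 \<omega>) \<partial>M)"
    by (rule nn_integral_cong) (auto simp: indicator_def)
  finally show ?thesis
    using joint_law[OF assms, of k1 k2] by (simp add: emeasure_eq_measure mult.assoc)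
qed

lemma nn_integral_joint_event:
  assumes [measurable]: "g \<in> borel_measurable borel"
  shows "(\<integral>\<^sup>+\<omega>. g (X \<omega>) * indicator {\<omega> \<in> space M. N1 \<omega> = k1 \<and> N2 \<omega> = k2} \<omega> \<partial>M)
       = (\<integral>\<^sup>+\<omega>. g (X \<omega>) * ennreal (joint_weight k1 k2 \<omega>) \<partial>M)"
proof -
  define S where "S = {\<omega> \<in> space M. N1 \<omega> = k1 \<and> N2 \<omega> = k2}"
  define q where "q \<omega> = ennreal (joint_weight k1 k2 \<omega>)" for \<omega>
  have [measurable]: "S \<in> sets M" "q \<in> borel_measurable M"
    unfolding S_def q_def by measurable
  have "distr (density M (indicator S)) borel X = distr (density M q) borel X"
  proof (rule measure_eqI)
    fix B assume "B \<in> sets (distr (density M (indicator S)) borel X)"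
    then have [measurable]: "B \<in> sets borel" by simp
    have "emeasure (density M (indicator S)) (X -` B \<inter> space M)
        = emeasure M {\<omega> \<in> space M. X \<omega> \<in> B \<and> N1 \<omega> = k1 \<and> N2 \<omega> = k2}"
    proof -
      have "(\<lambda>\<omega>. indicator S \<omega> * indicator (X -` B \<inter> space M) \<omega> :: ennreal)
          = indicator {\<omega> \<in> space M. X \<omega> \<in> B \<and> N1 \<omega> = k1 \<and> N2 \<omega> = k2}"
        by (auto simp: S_def indicator_def)
      then show ?thesis
        by (subst emeasure_density) auto
    qed
    also have "\<dots> = emeasure (density M q) (X -` B \<inter> space M)"
      by (subst emeasure_density) (auto simp: emeasure_joint_event q_def mult.commute)
    finally show "emeasure (distr (density M (indicator S)) borel X) B
        = emeasure (distr (density M q) borel X) B"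
      by (simp add: emeasure_distr)
  qed simp
  then have "integral\<^sup>N (distr (density M (indicator S)) borel X) g
      = integral\<^sup>N (distr (density M q) borel X) g" by simp
  then show ?thesis
    by (simp add: nn_integral_distr nn_integral_density S_def q_def mult.commute)
qed

lemma nn_integral_product:
  fixes g :: "real \<Rightarrow> ennreal" and a b :: "nat \<Rightarrow> real"
  assumes [measurable]: "g \<in> borel_measurable borel" and a: "\<And>k. 0 \<le> a k" and b: "\<And>k. 0 \<le> b k"
  shows "(\<integral>\<^sup>+\<omega>. g (X \<omega>) * ennreal (a (N1 \<omega>)) * ennreal (b (N2 \<omega>)) \<partial>M)
       = (\<integral>\<^sup>+\<omega>. g (X \<omega>) * (\<Sum>k. ennreal (a k * poisson_prob (\<mu>1 (X \<omega>)) k))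
                          * (\<Sum>k. ennreal (b k * poisson_prob (\<mu>2 (X \<omega>)) k)) \<partial>M)"
proof -
  define S where "S k1 k2 = {\<omega> \<in> space M. N1 \<omega> = k1 \<and> N2 \<omega> = k2}" for k1 k2
  have [measurable]: "S k1 k2 \<in> sets M" for k1 k2
    unfolding S_def by measurable
  define F where "F k1 k2 = ennreal (a k1) * ennreal (b k2)" for k1 k2
  have split: "g (X \<omega>) * ennreal (a (N1 \<omega>)) * ennreal (b (N2 \<omega>))
      = (\<Sum>k1. \<Sum>k2. F k1 k2 * (g (X \<omega>) * indicator (S k1 k2) \<omega>))" if "\<omega> \<in> space M" for \<omega>
  proof -
    have "F k1 k2 * (g (X \<omega>) * indicator (S k1 k2) \<omega>)
        = g (X \<omega>) * F k1 k2 * indicator {k1} (N1 \<omega>) * indicator {k2} (N2 \<omega>)" for k1 k2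
      using that by (simp add: S_def indicator_def mult_ac)
    then show ?thesis
      using suminf_suminf_indicator_pair[of "\<lambda>k1 k2. g (X \<omega>) * F k1 k2"] by (simp add: F_def mult_ac)
  qed
  have "(\<integral>\<^sup>+\<omega>. g (X \<omega>) * ennreal (a (N1 \<omega>)) * ennreal (b (N2 \<omega>)) \<partial>M)
      = (\<Sum>k1. \<Sum>k2. F k1 k2 * (\<integral>\<^sup>+\<omega>. g (X \<omega>) * indicator (S k1 k2) \<omega> \<partial>M))"
    by (simp add: split nn_integral_suminf nn_integral_cmult cong: nn_integral_cong)
  also have "\<dots> = (\<Sum>k1. \<Sum>k2. F k1 k2 * (\<integral>\<^sup>+\<omega>. g (X \<omega>) * ennreal (joint_weight k1 k2 \<omega>) \<partial>M))"
    unfolding S_def by (simp add: nn_integral_joint_event)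
  also have "\<dots> = (\<integral>\<^sup>+\<omega>. (\<Sum>k1. \<Sum>k2. F k1 k2 * (g (X \<omega>) * ennreal (joint_weight k1 k2 \<omega>))) \<partial>M)"
    by (simp add: nn_integral_suminf nn_integral_cmult)
  also have "\<dots> = (\<integral>\<^sup>+\<omega>. g (X \<omega>) * (\<Sum>k. ennreal (a k * poisson_prob (\<mu>1 (X \<omega>)) k))
                          * (\<Sum>k. ennreal (b k * poisson_prob (\<mu>2 (X \<omega>)) k)) \<partial>M)"
    using means_nonneg
  proof (intro nn_integral_cong_AE, eventually_elim)
    case (elim \<omega>)
    have "F k1 k2 * (g (X \<omega>) * ennreal (joint_weight k1 k2 \<omega>))
       = g (X \<omega>) * (ennreal (a k1 * poisson_prob (\<mu>1 (X \<omega>)) k1)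
                    * ennreal (b k2 * poisson_prob (\<mu>2 (X \<omega>)) k2))" for k1 k2
      using elim a[of k1] b[of k2] by (simp add: F_def ennreal_mult poisson_prob_nonneg mult_ac)
    then show ?case by (simp add: ennreal_suminf_cmult ennreal_suminf_multc mult_ac)
  qed
  finally show ?thesis .
qed

lemma integrable_product_of_means:
  fixes g A B :: "real \<Rightarrow> real"
  assumes "continuous_on UNIV g" "continuous_on UNIV A" "continuous_on UNIV B"
  shows "integrable M (\<lambda>\<omega>. g (X \<omega>) * A (\<mu>1 (X \<omega>)) * B (\<mu>2 (X \<omega>)))"
  using integrable_continuous_fun[of "\<lambda>x. g x * A (\<mu>1 x) * B (\<mu>2 x)"] assms
  by (simp add: continuous_intros continuous_on_compose2[OF _ continuous_\<mu>1]
      continuous_on_compose2[OF _ continuous_\<mu>2])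

lemma integral_product_nonneg:
  fixes g :: "real \<Rightarrow> real" and a b :: "nat \<Rightarrow> real" and A B :: "real \<Rightarrow> real"
  assumes g: "continuous_on UNIV g" and g_nonneg: "\<And>x. 0 \<le> g x"
    and a: "\<And>k. 0 \<le> a k" and b: "\<And>k. 0 \<le> b k"
    and A: "\<And>mu. 0 \<le> mu \<Longrightarrow> (\<lambda>k. a k * poisson_prob mu k) sums A mu"
    and B: "\<And>mu. 0 \<le> mu \<Longrightarrow> (\<lambda>k. b k * poisson_prob mu k) sums B mu"
    and continuous_A: "continuous_on UNIV A" and continuous_B: "continuous_on UNIV B"
  shows "integrable M (\<lambda>\<omega>. g (X \<omega>) * a (N1 \<omega>) * b (N2 \<omega>))"
    and "(\<integral>\<omega>. g (X \<omega>) * a (N1 \<omega>) * b (N2 \<omega>) \<partial>M)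
       = (\<integral>\<omega>. g (X \<omega>) * A (\<mu>1 (X \<omega>)) * B (\<mu>2 (X \<omega>)) \<partial>M)"
proof -
  have [measurable]: "g \<in> borel_measurable borel"
    by (rule borel_measurable_continuous_onI[OF g])
  note sum_A = poisson_weighted_sum_ennreal[OF a _ A]
    and sum_B = poisson_weighted_sum_ennreal[OF b _ B]
  let ?R = "\<lambda>\<omega>. g (X \<omega>) * A (\<mu>1 (X \<omega>)) * B (\<mu>2 (X \<omega>))"
  have int_R: "integrable M ?R"
    by (rule integrable_product_of_means[OF g continuous_A continuous_B])
  have R_nonneg: "AE \<omega> in M. 0 \<le> ?R \<omega>"
    using means_nonneg by eventually_elim (simp add: g_nonneg sum_A sum_B)
  have "(\<integral>\<^sup>+\<omega>. ennreal (g (X \<omega>) * a (N1 \<omega>) * b (N2 \<omega>)) \<partial>M)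
      = (\<integral>\<^sup>+\<omega>. ennreal (g (X \<omega>)) * ennreal (a (N1 \<omega>)) * ennreal (b (N2 \<omega>)) \<partial>M)"
    by (simp add: ennreal_mult g_nonneg a b)
  also have "\<dots> = (\<integral>\<^sup>+\<omega>. ennreal (g (X \<omega>)) * (\<Sum>k. ennreal (a k * poisson_prob (\<mu>1 (X \<omega>)) k))
                          * (\<Sum>k. ennreal (b k * poisson_prob (\<mu>2 (X \<omega>)) k)) \<partial>M)"
    by (rule nn_integral_product) (simp_all add: a b)
  also have "\<dots> = (\<integral>\<^sup>+\<omega>. ennreal (?R \<omega>) \<partial>M)"
    using means_nonneg
    by (intro nn_integral_cong_AE) (auto simp: sum_A sum_B ennreal_mult g_nonneg)
  also have "\<dots> = ennreal (integral\<^sup>L M ?R)"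
    by (rule nn_integral_eq_integral[OF int_R R_nonneg])
  finally have eq: "(\<integral>\<^sup>+\<omega>. ennreal (g (X \<omega>) * a (N1 \<omega>) * b (N2 \<omega>)) \<partial>M) = ennreal (integral\<^sup>L M ?R)" .
  have L_nonneg: "AE \<omega> in M. 0 \<le> g (X \<omega>) * a (N1 \<omega>) * b (N2 \<omega>)"
    by (simp add: g_nonneg a b)
  show int_L: "integrable M (\<lambda>\<omega>. g (X \<omega>) * a (N1 \<omega>) * b (N2 \<omega>))"
    by (rule integrableI_nn_integral_finite[OF _ L_nonneg eq]) measurable
  show "(\<integral>\<omega>. g (X \<omega>) * a (N1 \<omega>) * b (N2 \<omega>) \<partial>M) = integral\<^sup>L M ?R"
    using nn_integral_eq_integral[OF int_L L_nonneg] eq integral_nonneg_AE[OF L_nonneg]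
      integral_nonneg_AE[OF R_nonneg] by simp
qed

lemma integral_product:
  fixes g :: "real \<Rightarrow> real" and a b :: "nat \<Rightarrow> real" and A B :: "real \<Rightarrow> real"
  assumes g: "continuous_on UNIV g"
    and "\<And>k. 0 \<le> a k" "\<And>k. 0 \<le> b k"
    and "\<And>mu. 0 \<le> mu \<Longrightarrow> (\<lambda>k. a k * poisson_prob mu k) sums A mu"
    and "\<And>mu. 0 \<le> mu \<Longrightarrow> (\<lambda>k. b k * poisson_prob mu k) sums B mu"
    and "continuous_on UNIV A" "continuous_on UNIV B"
  shows "integrable M (\<lambda>\<omega>. g (X \<omega>) * a (N1 \<omega>) * b (N2 \<omega>))"
    and "(\<integral>\<omega>. g (X \<omega>) * a (N1 \<omega>) * b (N2 \<omega>) \<partial>M)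
       = (\<integral>\<omega>. g (X \<omega>) * A (\<mu>1 (X \<omega>)) * B (\<mu>2 (X \<omega>)) \<partial>M)"
proof -
  define gp gn where "gp x = max (g x) 0" and "gn x = max (- g x) 0" for x
  have "continuous_on UNIV gp" "continuous_on UNIV gn"
    unfolding gp_def gn_def by (intro continuous_intros g)+
  moreover have "0 \<le> gp x" "0 \<le> gn x" for x
    by (simp_all add: gp_def gn_def)
  ultimately have pos: "integrable M (\<lambda>\<omega>. gp (X \<omega>) * a (N1 \<omega>) * b (N2 \<omega>))"
      "(\<integral>\<omega>. gp (X \<omega>) * a (N1 \<omega>) * b (N2 \<omega>) \<partial>M)
       = (\<integral>\<omega>. gp (X \<omega>) * A (\<mu>1 (X \<omega>)) * B (\<mu>2 (X \<omega>)) \<partial>M)"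
    and neg: "integrable M (\<lambda>\<omega>. gn (X \<omega>) * a (N1 \<omega>) * b (N2 \<omega>))"
      "(\<integral>\<omega>. gn (X \<omega>) * a (N1 \<omega>) * b (N2 \<omega>) \<partial>M)
       = (\<integral>\<omega>. gn (X \<omega>) * A (\<mu>1 (X \<omega>)) * B (\<mu>2 (X \<omega>)) \<partial>M)"
    using integral_product_nonneg[OF _ _ assms(2-)] by blast+
  have "g x = gp x - gn x" for x
    by (simp add: gp_def gn_def)
  then have split: "g (X \<omega>) * u * v = gp (X \<omega>) * u * v - gn (X \<omega>) * u * v" for \<omega> u v
    by (simp add: left_diff_distrib)
  show "integrable M (\<lambda>\<omega>. g (X \<omega>) * a (N1 \<omega>) * b (N2 \<omega>))"
    unfolding split using pos(1) neg(1) by (rule Bochner_Integration.integrable_diff)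
  show "(\<integral>\<omega>. g (X \<omega>) * a (N1 \<omega>) * b (N2 \<omega>) \<partial>M)
       = (\<integral>\<omega>. g (X \<omega>) * A (\<mu>1 (X \<omega>)) * B (\<mu>2 (X \<omega>)) \<partial>M)"
    unfolding split using pos neg
      integrable_product_of_means[OF \<open>continuous_on UNIV gp\<close> assms(6,7)]
      integrable_product_of_means[OF \<open>continuous_on UNIV gn\<close> assms(6,7)]
    by simp
qed

lemma integral_mult_N1:
  assumes "continuous_on UNIV g"
  shows "integrable M (\<lambda>\<omega>. g (X \<omega>) * real (N1 \<omega>))"
    and "(\<integral>\<omega>. g (X \<omega>) * real (N1 \<omega>) \<partial>M) = (\<integral>\<omega>. g (X \<omega>) * \<mu>1 (X \<omega>) \<partial>M)"
  using integral_product[OF assms, of real "\<lambda>_. 1" "\<lambda>x. x" "\<lambda>_. 1"]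
  by (simp_all add: poisson_prob_mean_sums poisson_prob_sums)

lemma integral_mult_N2:
  assumes "continuous_on UNIV g"
  shows "integrable M (\<lambda>\<omega>. g (X \<omega>) * real (N2 \<omega>))"
    and "(\<integral>\<omega>. g (X \<omega>) * real (N2 \<omega>) \<partial>M) = (\<integral>\<omega>. g (X \<omega>) * \<mu>2 (X \<omega>) \<partial>M)"
  using integral_product[OF assms, of "\<lambda>_. 1" real "\<lambda>_. 1" "\<lambda>x. x"]
  by (simp_all add: poisson_prob_mean_sums poisson_prob_sums)

lemma integral_N1_squared:
  shows "integrable M (\<lambda>\<omega>. (real (N1 \<omega>))\<^sup>2)"
    and "(\<integral>\<omega>. (real (N1 \<omega>))\<^sup>2 \<partial>M) = (\<integral>\<omega>. \<mu>1 (X \<omega>) + (\<mu>1 (X \<omega>))\<^sup>2 \<partial>M)"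
  using integral_product[of "\<lambda>_. 1" "\<lambda>k. (real k)\<^sup>2" "\<lambda>_. 1" "\<lambda>x. x + x\<^sup>2" "\<lambda>_. 1"]
  by (simp_all add: poisson_prob_second_moment_sums poisson_prob_sums continuous_intros)

lemma integral_N2_squared:
  shows "integrable M (\<lambda>\<omega>. (real (N2 \<omega>))\<^sup>2)"
    and "(\<integral>\<omega>. (real (N2 \<omega>))\<^sup>2 \<partial>M) = (\<integral>\<omega>. \<mu>2 (X \<omega>) + (\<mu>2 (X \<omega>))\<^sup>2 \<partial>M)"
  using integral_product[of "\<lambda>_. 1" "\<lambda>_. 1" "\<lambda>k. (real k)\<^sup>2" "\<lambda>_. 1" "\<lambda>x. x + x\<^sup>2"]
  by (simp_all add: poisson_prob_second_moment_sums poisson_prob_sums continuous_intros)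

lemma integral_N1_N2:
  shows "integrable M (\<lambda>\<omega>. real (N1 \<omega>) * real (N2 \<omega>))"
    and "(\<integral>\<omega>. real (N1 \<omega>) * real (N2 \<omega>) \<partial>M) = (\<integral>\<omega>. \<mu>1 (X \<omega>) * \<mu>2 (X \<omega>) \<partial>M)"
  using integral_product[of "\<lambda>_. 1" real real "\<lambda>x. x" "\<lambda>x. x"]
  by (simp_all add: poisson_prob_mean_sums)

abbreviation noise :: "'a \<Rightarrow> real" where
  "noise \<omega> \<equiv> real (N2 \<omega>) - real (N1 \<omega>) - (\<mu>2 (X \<omega>) - \<mu>1 (X \<omega>))"

lemma noise_uncorrelated:
  assumes g: "continuous_on UNIV g"
  shows "integrable M (\<lambda>\<omega>. g (X \<omega>) * noise \<omega>)"
    and "(\<integral>\<omega>. g (X \<omega>) * noise \<omega> \<partial>M) = 0"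
proof -
  have int_means: "integrable M (\<lambda>\<omega>. g (X \<omega>) * \<mu>1 (X \<omega>))" "integrable M (\<lambda>\<omega>. g (X \<omega>) * \<mu>2 (X \<omega>))"
    using integrable_continuous_fun[of "\<lambda>x. g x * \<mu>1 x"] integrable_continuous_fun[of "\<lambda>x. g x * \<mu>2 x"]
    by (simp_all add: continuous_intros g continuous_\<mu>1 continuous_\<mu>2)
  have expand: "g (X \<omega>) * noise \<omega> = g (X \<omega>) * real (N2 \<omega>) - g (X \<omega>) * real (N1 \<omega>)
      - (g (X \<omega>) * \<mu>2 (X \<omega>) - g (X \<omega>) * \<mu>1 (X \<omega>))" for \<omega>
    by (simp add: algebra_simps)
  show "integrable M (\<lambda>\<omega>. g (X \<omega>) * noise \<omega>)"
    unfolding expand using integral_mult_N1[OF g] integral_mult_N2[OF g] int_means by simp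
  show "(\<integral>\<omega>. g (X \<omega>) * noise \<omega> \<partial>M) = 0"
    unfolding expand using integral_mult_N1[OF g] integral_mult_N2[OF g] int_means by simp
qed

lemma noise_second_moment:
  shows "integrable M (\<lambda>\<omega>. (noise \<omega>)\<^sup>2)"
    and "(\<integral>\<omega>. (noise \<omega>)\<^sup>2 \<partial>M) = (\<integral>\<omega>. \<mu>1 (X \<omega>) + \<mu>2 (X \<omega>) \<partial>M)"
proof -
  define \<delta> where "\<delta> x = \<mu>2 x - \<mu>1 x" for x
  have \<delta>: "continuous_on UNIV \<delta>"
    unfolding \<delta>_def by (intro continuous_intros continuous_\<mu>1 continuous_\<mu>2)
  have expand: "(noise \<omega>)\<^sup>2 = (real (N2 \<omega>))\<^sup>2 + (real (N1 \<omega>))\<^sup>2 - 2 * (real (N1 \<omega>) * real (N2 \<omega>))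
      + 2 * (\<delta> (X \<omega>) * real (N1 \<omega>)) - 2 * (\<delta> (X \<omega>) * real (N2 \<omega>)) + (\<delta> (X \<omega>))\<^sup>2" for \<omega>
    by (simp add: \<delta>_def power2_eq_square algebra_simps)
  have means_expand: "\<mu>1 x + \<mu>2 x = (\<mu>2 x + (\<mu>2 x)\<^sup>2) + (\<mu>1 x + (\<mu>1 x)\<^sup>2) - 2 * (\<mu>1 x * \<mu>2 x)
      + 2 * (\<delta> x * \<mu>1 x) - 2 * (\<delta> x * \<mu>2 x) + (\<delta> x)\<^sup>2" for x
    by (simp add: \<delta>_def power2_eq_square algebra_simps)
  have int: "integrable M (\<lambda>\<omega>. h (X \<omega>))" if "continuous_on UNIV h" for h :: "real \<Rightarrow> real"
    by (rule integrable_continuous_fun[OF that])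
  note moments = integral_N1_squared integral_N2_squared integral_N1_N2
    integral_mult_N1[OF \<delta>] integral_mult_N2[OF \<delta>]
  have int_means: "integrable M (\<lambda>\<omega>. \<mu>1 (X \<omega>) + (\<mu>1 (X \<omega>))\<^sup>2)"
    "integrable M (\<lambda>\<omega>. \<mu>2 (X \<omega>) + (\<mu>2 (X \<omega>))\<^sup>2)"
    "integrable M (\<lambda>\<omega>. \<mu>1 (X \<omega>) * \<mu>2 (X \<omega>))"
    "integrable M (\<lambda>\<omega>. \<delta> (X \<omega>) * \<mu>1 (X \<omega>))"
    "integrable M (\<lambda>\<omega>. \<delta> (X \<omega>) * \<mu>2 (X \<omega>))"
    "integrable M (\<lambda>\<omega>. (\<delta> (X \<omega>))\<^sup>2)"
    by (rule int, intro continuous_intros \<delta> continuous_\<mu>1 continuous_\<mu>2)+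
  show "integrable M (\<lambda>\<omega>. (noise \<omega>)\<^sup>2)"
    unfolding expand using moments int_means by simp
  show "(\<integral>\<omega>. (noise \<omega>)\<^sup>2 \<partial>M) = (\<integral>\<omega>. \<mu>1 (X \<omega>) + \<mu>2 (X \<omega>) \<partial>M)"
    unfolding expand means_expand using moments int_means by simp
qed

lemma affine_noise_step:
  fixes m q :: real and W :: "'a \<Rightarrow> real"
  assumes W: "\<And>\<omega>. \<omega> \<in> space M \<Longrightarrow> W \<omega> = m + q * (X \<omega> + noise \<omega> - m)"
  shows "integrable M W"
    and "expectation W = m + q * (expectation X - m)"
    and "variance W = q\<^sup>2 * (variance X + expectation (\<lambda>\<omega>. \<mu>1 (X \<omega>) + \<mu>2 (X \<omega>)))"
proof -
  have int_X: "integrable M X"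
    using integrable_continuous_fun[of "\<lambda>x. x"] by simp
  have int_centred: "integrable M (\<lambda>\<omega>. (X \<omega> - expectation X)\<^sup>2)"
    using integrable_continuous_fun[of "\<lambda>x. (x - expectation X)\<^sup>2"] by (simp add: continuous_intros)
  note noise = noise_uncorrelated[of "\<lambda>_. 1", simplified]
  have "continuous_on UNIV (\<lambda>x::real. x - expectation X)"
    by (intro continuous_intros)
  note cross = noise_uncorrelated[OF this]
  have "integrable M (\<lambda>\<omega>. m + q * (X \<omega> + noise \<omega> - m))"
    using int_X noise by simp
  then show "integrable M W"
    using W by (simp cong: Bochner_Integration.integrable_cong)
  show EW: "expectation W = m + q * (expectation X - m)"
    using W int_X noise by (simp cong: Bochner_Integration.integral_cong add: prob_space)
  have "(W \<omega> - expectation W)\<^sup>2 = q\<^sup>2 * ((X \<omega> - expectation X)\<^sup>2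
      + 2 * ((X \<omega> - expectation X) * noise \<omega>) + (noise \<omega>)\<^sup>2)" if "\<omega> \<in> space M" for \<omega>
    by (simp add: W[OF that] EW power2_eq_square algebra_simps)
  then show "variance W = q\<^sup>2 * (variance X + expectation (\<lambda>\<omega>. \<mu>1 (X \<omega>) + \<mu>2 (X \<omega>)))"
    using int_centred cross noise_second_moment
    by (simp cong: Bochner_Integration.integral_cong)
qed

end

lemma (in prob_space) expectation_variance_affine:
  fixes X Z :: "'a \<Rightarrow> real"
  assumes X: "integrable M X" and Z: "\<And>\<omega>. \<omega> \<in> space M \<Longrightarrow> Z \<omega> = m + b * (X \<omega> - m)"
  shows "integrable M Z" and "expectation Z = m + b * (expectation X - m)"
    and "variance Z = b\<^sup>2 * variance X"
proof -
  show "integrable M Z"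
    using X Z by (simp cong: Bochner_Integration.integrable_cong)
  show EZ: "expectation Z = m + b * (expectation X - m)"
    using X Z by (simp cong: Bochner_Integration.integral_cong add: prob_space)
  have "(Z \<omega> - expectation Z)\<^sup>2 = b\<^sup>2 * (X \<omega> - expectation X)\<^sup>2" if "\<omega> \<in> space M" for \<omega>
    by (simp add: Z[OF that] EZ power2_eq_square algebra_simps)
  then show "variance Z = b\<^sup>2 * variance X"
    by (simp cong: Bochner_Integration.integral_cong)
qed

lemma implicit_relaxation_step:
  fixes lam m s \<eta> y z :: real
  assumes z: "z = y + s * ((1 - \<eta>) * (lam * (m - y)) + \<eta> * (lam * (m - z)))"
    and den: "1 + \<eta> * lam * s \<noteq> 0"
  shows "z = m + (1 - (1 - \<eta>) * lam * s) / (1 + \<eta> * lam * s) * (y - m)"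
proof -
  have "z * (1 + \<eta> * lam * s) = m * (1 + \<eta> * lam * s) + (1 - (1 - \<eta>) * lam * s) * (y - m)"
    using z by algebra
  then show ?thesis
    using den by (simp add: field_simps)
qed

lemma LIMSEQ_contracting_recursion_zero:
  fixes u e :: "nat \<Rightarrow> real"
  assumes r: "\<bar>r\<bar> < 1" and u: "\<And>n. u (Suc n) = r * u n + e n" and e: "e \<longlonglongrightarrow> 0"
  shows "u \<longlonglongrightarrow> 0"
proof (rule LIMSEQ_I)
  fix \<epsilon> :: real
  assume "0 < \<epsilon>"
  define \<delta> where "\<delta> = \<epsilon> * (1 - \<bar>r\<bar>) / 2"
  have "0 < \<delta>" and \<delta>: "\<delta> / (1 - \<bar>r\<bar>) = \<epsilon> / 2"
    using \<open>0 < \<epsilon>\<close> r by (simp_all add: \<delta>_def field_simps)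
  obtain N where N: "\<And>n. N \<le> n \<Longrightarrow> \<bar>e n\<bar> < \<delta>"
    using LIMSEQ_D[OF e \<open>0 < \<delta>\<close>] by auto
  have bound: "\<bar>u (N + k)\<bar> \<le> \<bar>r\<bar> ^ k * \<bar>u N\<bar> + \<epsilon> / 2" for k
  proof (induction k)
    case 0
    show ?case using \<open>0 < \<epsilon>\<close> by simp
  next
    case (Suc k)
    have "\<bar>u (N + Suc k)\<bar> \<le> \<bar>r\<bar> * \<bar>u (N + k)\<bar> + \<delta>"
      using N[of "N + k"] by (simp add: u abs_mult order_trans[OF abs_triangle_ineq])
    also have "\<dots> \<le> \<bar>r\<bar> * (\<bar>r\<bar> ^ k * \<bar>u N\<bar> + \<epsilon> / 2) + \<delta>"
      using Suc by (simp add: mult_left_mono)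
    also have "\<dots> = \<bar>r\<bar> ^ Suc k * \<bar>u N\<bar> + \<epsilon> / 2"
      using r \<delta> by (simp add: field_simps)
    finally show ?case .
  qed
  have "(\<lambda>k. \<bar>r\<bar> ^ k * \<bar>u N\<bar>) \<longlonglongrightarrow> 0"
    using r by (intro tendsto_mult_left_zero LIMSEQ_power_zero) simp
  then obtain K where K: "\<And>k. K \<le> k \<Longrightarrow> \<bar>r\<bar> ^ k * \<bar>u N\<bar> < \<epsilon> / 2"
    using LIMSEQ_D[of _ 0 "\<epsilon> / 2"] \<open>0 < \<epsilon>\<close> by fastforce
  have "\<bar>u n\<bar> < \<epsilon>" if "N + K \<le> n" for n
  proof -
    have "K \<le> n - N" "N + (n - N) = n"
      using that by simp_all
    then show ?thesis
      using bound[of "n - N"] K[of "n - N"] by simp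
  qed
  then show "\<exists>n0. \<forall>n\<ge>n0. norm (u n - 0) < \<epsilon>"
    by auto
qed

lemma LIMSEQ_contracting_recursion:
  fixes x b :: "nat \<Rightarrow> real"
  assumes r: "\<bar>r\<bar> < 1" and x: "\<And>n. x (Suc n) = r * x n + b n" and b: "b \<longlonglongrightarrow> l"
  shows "x \<longlonglongrightarrow> l / (1 - r)"
proof -
  have "1 - r \<noteq> 0"
    using r by auto
  have "(\<lambda>n. x n - l / (1 - r)) \<longlonglongrightarrow> 0"
  proof (rule LIMSEQ_contracting_recursion_zero[OF r])
    show "x (Suc n) - l / (1 - r) = r * (x n - l / (1 - r)) + (b n - l)" for n
      using \<open>1 - r \<noteq> 0\<close> by (simp add: x field_simps)
    show "(\<lambda>n. b n - l) \<longlonglongrightarrow> 0"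
      using b by (simp add: LIM_zero)
  qed
  then show ?thesis
    by (simp add: LIM_zero_iff)
qed

lemma coupled_affine_recursion_limits:
  fixes e z v w :: "nat \<Rightarrow> real"
  assumes r: "\<bar>q1 * q2\<bar> < 1"
    and e: "\<And>n. e (Suc n) = m + q2 * (z n - m)"
    and z: "\<And>n. z (Suc n) = m + q1 * (e (Suc n) - m)"
    and v: "\<And>n. v (Suc n) = q2\<^sup>2 * (w n + (\<alpha> + \<beta> * z n))"
    and w: "\<And>n. w (Suc n) = q1\<^sup>2 * v (Suc n)"
  shows "e \<longlonglongrightarrow> m" and "v \<longlonglongrightarrow> q2\<^sup>2 * (\<alpha> + \<beta> * m) / (1 - (q1 * q2)\<^sup>2)"
proof -
  let ?r = "q1 * q2"
  have r2: "\<bar>?r\<^sup>2\<bar> < 1"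
    using r by (simp add: abs_square_less_1)
  have "?r \<noteq> 1" "1 - ?r\<^sup>2 \<noteq> 0"
    using r r2 by auto
  have "z \<longlonglongrightarrow> m * (1 - ?r) / (1 - ?r)"
    by (rule LIMSEQ_contracting_recursion[OF r, where b="\<lambda>_. m * (1 - ?r)"])
       (simp_all add: z e algebra_simps)
  then have z_lim: "z \<longlonglongrightarrow> m"
    using \<open>?r \<noteq> 1\<close> by simp
  have "w (Suc n) = ?r\<^sup>2 * w n + ?r\<^sup>2 * (\<alpha> + \<beta> * z n)" for n
    by (simp only: w v power_mult_distrib distrib_left mult.assoc)
  moreover have "(\<lambda>n. ?r\<^sup>2 * (\<alpha> + \<beta> * z n)) \<longlonglongrightarrow> ?r\<^sup>2 * (\<alpha> + \<beta> * m)"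
    by (intro tendsto_intros z_lim)
  ultimately have w_lim: "w \<longlonglongrightarrow> ?r\<^sup>2 * (\<alpha> + \<beta> * m) / (1 - ?r\<^sup>2)"
    by (rule LIMSEQ_contracting_recursion[OF r2])
  have "(\<lambda>n. e (Suc n)) \<longlonglongrightarrow> m + q2 * (m - m)"
    unfolding e by (intro tendsto_intros z_lim)
  then show "e \<longlonglongrightarrow> m"
    by (simp add: LIMSEQ_imp_Suc)
  have "(\<lambda>n. v (Suc n)) \<longlonglongrightarrow> q2\<^sup>2 * (?r\<^sup>2 * (\<alpha> + \<beta> * m) / (1 - ?r\<^sup>2) + (\<alpha> + \<beta> * m))"
    unfolding v by (intro tendsto_intros z_lim w_lim)
  moreover have "t * a / (1 - t) + a = a / (1 - t)" if "1 - t \<noteq> 0" for t a :: real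
    using that by (simp add: field_simps)
  ultimately show "v \<longlonglongrightarrow> q2\<^sup>2 * (\<alpha> + \<beta> * m) / (1 - ?r\<^sup>2)"
    using \<open>1 - ?r\<^sup>2 \<noteq> 0\<close> by (simp add: LIMSEQ_imp_Suc)
qed

lemma stationary_variance_closed_form:
  fixes c1 c2 xT \<tau> Q1 Q2 :: real
  assumes "0 < c1 + c2" and Q2: "Q2 \<noteq> 0" and stable: "\<bar>Q1 * Q2\<bar> < 1"
  shows "Q2\<^sup>2 * (c2 * xT * \<tau> + (c1 - c2) * \<tau> * (c2 / (c1 + c2) * xT)) / (1 - (Q1 * Q2)\<^sup>2)
    = 2 * (c1 + c2) * \<tau> / (1 / Q2\<^sup>2 - Q1\<^sup>2) * (c1 * c2 / (c1 + c2)\<^sup>2 * xT)"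
proof -
  define lam where "lam = c1 + c2"
  have "0 < lam"
    using assms(1) by (simp add: lam_def)
  have "(Q1 * Q2)\<^sup>2 < 1"
    using stable by (simp add: abs_square_less_1)
  then have "1 - (Q1 * Q2)\<^sup>2 \<noteq> 0"
    by simp
  have propensity: "c2 * xT * \<tau> + (c1 - c2) * \<tau> * (c2 / lam * xT) = 2 * \<tau> * c1 * c2 * xT / lam"
    using \<open>0 < lam\<close> by (simp add: lam_def field_simps)
  have "1 / Q2\<^sup>2 - Q1\<^sup>2 = (1 - (Q1 * Q2)\<^sup>2) / Q2\<^sup>2"
    using Q2 by (simp add: field_simps power_mult_distrib)
  then show ?thesis
    unfolding lam_def[symmetric] propensity using \<open>0 < lam\<close> Q2 \<open>1 - (Q1 * Q2)\<^sup>2 \<noteq> 0\<close>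
    by (simp add: field_simps power2_eq_square)
qed

lemma poisson_pair_given_of_history:
  fixes M :: "'a measure" and Y :: "nat \<Rightarrow> 'a \<Rightarrow> real" and X :: "'a \<Rightarrow> real"
    and N1 N2 :: "'a \<Rightarrow> nat" and h \<mu>1 \<mu>2 :: "real \<Rightarrow> real"
  assumes M: "prob_space M"
    and [measurable]: "Y n \<in> borel_measurable M" "N1 \<in> measurable M (count_space UNIV)"
      "N2 \<in> measurable M (count_space UNIV)"
    and h: "continuous_on UNIV h" and X: "\<And>\<omega>. \<omega> \<in> space M \<Longrightarrow> X \<omega> = h (Y n \<omega>)"
    and \<mu>: "continuous_on UNIV \<mu>1" "continuous_on UNIV \<mu>2"
    and bounded: "AE \<omega> in M. lo \<le> X \<omega> \<and> X \<omega> \<le> hi"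
    and nonneg: "AE \<omega> in M. 0 \<le> \<mu>1 (X \<omega>) \<and> 0 \<le> \<mu>2 (X \<omega>)"
    and history: "\<And>(A :: nat \<Rightarrow> real set) k1 k2. (\<And>i. A i \<in> sets borel) \<Longrightarrow>
       measure M {\<omega> \<in> space M. (\<forall>i\<le>n. Y i \<omega> \<in> A i) \<and> N1 \<omega> = k1 \<and> N2 \<omega> = k2}
       = (\<integral>\<omega>. indicator {\<omega> \<in> space M. \<forall>i\<le>n. Y i \<omega> \<in> A i} \<omega>
              * poisson_prob (\<mu>1 (X \<omega>)) k1 * poisson_prob (\<mu>2 (X \<omega>)) k2 \<partial>M)"
  shows "poisson_pair_given M X N1 N2 \<mu>1 \<mu>2 lo hi"
proof -
  have [measurable]: "h \<in> borel_measurable borel"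
    by (rule borel_measurable_continuous_onI[OF h])
  have "(\<lambda>\<omega>. h (Y n \<omega>)) \<in> borel_measurable M"
    by measurable
  then have X_measurable: "X \<in> borel_measurable M"
    using X by (simp cong: measurable_cong)
  have "measure M {\<omega> \<in> space M. X \<omega> \<in> B \<and> N1 \<omega> = k1 \<and> N2 \<omega> = k2}
      = (\<integral>\<omega>. indicator {\<omega> \<in> space M. X \<omega> \<in> B} \<omega>
            * poisson_prob (\<mu>1 (X \<omega>)) k1 * poisson_prob (\<mu>2 (X \<omega>)) k2 \<partial>M)"
    if "B \<in> sets borel" for B k1 k2
  proof -
    define A where "A i = (if i = n then h -` B else UNIV)" for i
    have "A i \<in> sets borel" for i
      using measurable_sets[OF \<open>h \<in> borel_measurable borel\<close> that] by (simp add: A_def)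
    moreover have "{\<omega> \<in> space M. (\<forall>i\<le>n. Y i \<omega> \<in> A i) \<and> N1 \<omega> = k1 \<and> N2 \<omega> = k2}
        = {\<omega> \<in> space M. X \<omega> \<in> B \<and> N1 \<omega> = k1 \<and> N2 \<omega> = k2}"
      and "{\<omega> \<in> space M. \<forall>i\<le>n. Y i \<omega> \<in> A i} = {\<omega> \<in> space M. X \<omega> \<in> B}"
      by (auto simp: A_def X)
    ultimately show ?thesis
      using history[of A k1 k2] by simp
  qed
  then show ?thesis
    using M X_measurable \<mu> bounded nonneg
    by (simp add: poisson_pair_given_def poisson_pair_given_axioms_def)
qed

theorem mainTheorem2:
  fixes M :: "'a measure"
    and c1 c2 xT \<tau> \<theta> \<eta>1 \<eta>2 :: real
    and Y Yhat Ytil :: "nat \<Rightarrow> 'a \<Rightarrow> real"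
    and P1 P2 :: "nat \<Rightarrow> 'a \<Rightarrow> nat"
  defines "lam \<equiv> c1 + c2"
  defines "f \<equiv> (\<lambda>y. c2 * (xT - y) - c1 * y)"
  defines "Q1 \<equiv> (1 - (1 - \<eta>1) * lam * (1 - \<theta>) * \<tau>) / (1 + \<eta>1 * lam * (1 - \<theta>) * \<tau>)"
  defines "Q2 \<equiv> (1 - (1 - \<eta>2) * lam * \<theta> * \<tau>) / (1 + \<eta>2 * lam * \<theta> * \<tau>)"
  assumes M: "prob_space M"
    and c1: "c1 > 0" and c2: "c2 > 0" and xT: "xT > 0" and tau: "\<tau> > 0"
    and den1: "1 + \<eta>1 * lam * (1 - \<theta>) * \<tau> \<noteq> 0"
    and den2: "1 + \<eta>2 * lam * \<theta> * \<tau> \<noteq> 0"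
    and Q2nz: "Q2 \<noteq> 0"
    and Y_rv: "\<And>n. Y n \<in> borel_measurable M"
    and P1_rv: "\<And>n. P1 n \<in> measurable M (count_space UNIV)"
    and P2_rv: "\<And>n. P2 n \<in> measurable M (count_space UNIV)"
    and Y0_sq: "integrable M (\<lambda>\<omega>. (Y 0 \<omega>)\<^sup>2)"
    and step1: "\<And>n \<omega>. \<omega> \<in> space M \<Longrightarrow>
       Yhat n \<omega> = Y n \<omega> + (1 - \<theta>) * \<tau> * ((1 - \<eta>1) * f (Y n \<omega>) + \<eta>1 * f (Yhat n \<omega>))"
    and step2: "\<And>n \<omega>. \<omega> \<in> space M \<Longrightarrow>
       Ytil n \<omega> = Yhat n \<omega> + real (P2 n \<omega>) - real (P1 n \<omega>) - \<tau> * f (Yhat n \<omega>)"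
    and step3: "\<And>n \<omega>. \<omega> \<in> space M \<Longrightarrow>
       Y (Suc n) \<omega> = Ytil n \<omega> + \<theta> * \<tau> * ((1 - \<eta>2) * f (Ytil n \<omega>) + \<eta>2 * f (Y (Suc n) \<omega>))"
    and cond_poisson: "\<And>n (A :: nat \<Rightarrow> real set) k1 k2. (\<And>i. A i \<in> sets borel) \<Longrightarrow>
       measure M {\<omega> \<in> space M. (\<forall>i\<le>n. Y i \<omega> \<in> A i) \<and> P1 n \<omega> = k1 \<and> P2 n \<omega> = k2}
       = (\<integral>\<omega>. indicator {\<omega> \<in> space M. \<forall>i\<le>n. Y i \<omega> \<in> A i} \<omega>
              * poisson_prob (c1 * Yhat n \<omega> * \<tau>) k1
              * poisson_prob (c2 * (xT - Yhat n \<omega>) * \<tau>) k2 \<partial>M)"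
    and well_defined: "\<And>n. AE \<omega> in M. 0 \<le> c1 * Yhat n \<omega> * \<tau> \<and> 0 \<le> c2 * (xT - Yhat n \<omega>) * \<tau>"
    and stable: "\<bar>Q1 * Q2\<bar> < 1"
  shows "(\<lambda>n. prob_space.expectation M (Y n)) \<longlonglongrightarrow> c2 / lam * xT
       \<and> (\<lambda>n. prob_space.variance M (Y n)) \<longlonglongrightarrow>
           2 * lam * \<tau> / (1 / Q2\<^sup>2 - Q1\<^sup>2) * (c1 * c2 / lam\<^sup>2 * xT)"
proof -
  interpret prob_space M by (rule M)
  have "0 < lam"
    using c1 c2 by (simp add: lam_def)
  define m where "m = c2 / lam * xT"
  have f: "f y = lam * (m - y)" for y
    using \<open>0 < lam\<close> by (simp add: f_def m_def lam_def field_simps)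
  have Yhat: "Yhat n \<omega> = m + Q1 * (Y n \<omega> - m)" if "\<omega> \<in> space M" for n \<omega>
    using implicit_relaxation_step[OF step1[OF that, unfolded f]] den1
    by (simp add: Q1_def mult.assoc)
  have Y_Suc: "Y (Suc n) \<omega> = m + Q2 * (Yhat n \<omega> + (real (P2 n \<omega>) - real (P1 n \<omega>)
      - (c2 * (xT - Yhat n \<omega>) * \<tau> - c1 * Yhat n \<omega> * \<tau>)) - m)" if "\<omega> \<in> space M" for n \<omega>
  proof -
    have "\<tau> * f y = c2 * (xT - y) * \<tau> - c1 * y * \<tau>" for y
      by (simp add: f_def algebra_simps)
    then show ?thesis
      using implicit_relaxation_step[OF step3[OF that, unfolded f]] den2 step2[OF that]
      by (simp add: Q2_def mult.assoc)
  qed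
  have bounds: "AE \<omega> in M. 0 \<le> Yhat n \<omega> \<and> Yhat n \<omega> \<le> xT" for n
    using well_defined[of n] by eventually_elim (use c1 c2 tau in \<open>auto simp: zero_le_mult_iff\<close>)
  have pair: "poisson_pair_given M (Yhat n) (P1 n) (P2 n) (\<lambda>y. c1 * y * \<tau>) (\<lambda>y. c2 * (xT - y) * \<tau>) 0 xT"
    for n
    by (rule poisson_pair_given_of_history[where ?\<mu>1.0="\<lambda>y. c1 * y * \<tau>" and ?\<mu>2.0="\<lambda>y. c2 * (xT - y) * \<tau>",
          OF M Y_rv P1_rv P2_rv _ Yhat _ _ bounds well_defined cond_poisson])
       (simp_all add: continuous_intros)
  note step = poisson_pair_given.affine_noise_step[OF pair Y_Suc]
  have "integrable M (Yhat n)" for n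
    using poisson_pair_given.integrable_continuous_fun[OF pair, of "\<lambda>x. x"] by simp
  then have means: "expectation (\<lambda>\<omega>. c1 * Yhat n \<omega> * \<tau> + c2 * (xT - Yhat n \<omega>) * \<tau>)
      = c2 * xT * \<tau> + (c1 - c2) * \<tau> * expectation (Yhat n)" for n
    by (simp add: algebra_simps prob_space)
  note Yhat_Suc = expectation_variance_affine[OF step(1) Yhat[of _ "Suc n" for n]]
  have "variance (Y (Suc n))
      = Q2\<^sup>2 * (variance (Yhat n) + (c2 * xT * \<tau> + (c1 - c2) * \<tau> * expectation (Yhat n)))" for n
    using step(3) by (simp add: means)
  note limits = coupled_affine_recursion_limits[OF stable, where e="\<lambda>n. expectation (Y n)"
      and z="\<lambda>n. expectation (Yhat n)" and v="\<lambda>n. variance (Y n)" and w="\<lambda>n. variance (Yhat n)",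
      OF step(2) Yhat_Suc(2) this Yhat_Suc(3)]
  then show ?thesis
    using stationary_variance_closed_form[OF _ Q2nz stable, of c1 c2 xT \<tau>] \<open>0 < lam\<close>
    by (simp add: m_def lam_def)
qed

end
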